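(* Let $\mathbf{P}$ be a poset that has an interval representation in which every interval has length in $[1,2]$ (i.e. $\mathbf{P}\in C(2)$). Then $\dim(\mathbf{P})\le 4$.
   Context: An interval representation of a poset $(X,P)$ assigns to each $x\in X$ a closed real interval $[l_x,r_x]$ such that $x<y$ in $P$ iff $r_x<l_y$; the length is $r_x-l_x$. $C(\alpha)$ denotes the class of posets having an interval representation with all lengths in $[1,\alpha]$. The dimension $\dim(\mathbf{P})$ is the minimum number of linear extensions of $P$ whose intersection is $P$. *)

theory Defs
  imports Complex_Main
begin

definition strict_poset :: "'a set \<Rightarrow> ('a \<Rightarrow> 'a \<Rightarrow> bool) \<Rightarrow> bool" where
  "strict_poset X lt \<longleftrightarrow>
     (\<forall>x\<in>X. \<not> lt x x) \<and>
     (\<forall>x\<in>X. \<forall>y\<in>X. \<forall>z\<in>X. lt x y \<longrightarrow> lt y z \<longrightarrow> lt x z)"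

definition interval_rep :: "'a set \<Rightarrow> ('a \<Rightarrow> 'a \<Rightarrow> bool) \<Rightarrow> ('a \<Rightarrow> real) \<Rightarrow> ('a \<Rightarrow> real) \<Rightarrow> bool" where
  "interval_rep X lt l r \<longleftrightarrow>
     (\<forall>x\<in>X. l x \<le> r x) \<and> (\<forall>x\<in>X. \<forall>y\<in>X. lt x y \<longleftrightarrow> r x < l y)"

definition in_C :: "real \<Rightarrow> 'a set \<Rightarrow> ('a \<Rightarrow> 'a \<Rightarrow> bool) \<Rightarrow> bool" where
  "in_C \<alpha> X lt \<longleftrightarrow>
     (\<exists>l r. interval_rep X lt l r \<and> (\<forall>x\<in>X. 1 \<le> r x - l x \<and> r x - l x \<le> \<alpha>))"

definition linear_extension :: "'a set \<Rightarrow> ('a \<Rightarrow> 'a \<Rightarrow> bool) \<Rightarrow> ('a \<Rightarrow> 'a \<Rightarrow> bool) \<Rightarrow> bool" where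
  "linear_extension X lt L \<longleftrightarrow>
     (\<forall>x\<in>X. \<not> L x x) \<and>
     (\<forall>x\<in>X. \<forall>y\<in>X. \<forall>z\<in>X. L x y \<longrightarrow> L y z \<longrightarrow> L x z) \<and>
     (\<forall>x\<in>X. \<forall>y\<in>X. x \<noteq> y \<longrightarrow> L x y \<or> L y x) \<and>
     (\<forall>x\<in>X. \<forall>y\<in>X. lt x y \<longrightarrow> L x y)"

definition has_realizer :: "'a set \<Rightarrow> ('a \<Rightarrow> 'a \<Rightarrow> bool) \<Rightarrow> nat \<Rightarrow> bool" where
  "has_realizer X lt k \<longleftrightarrow>
     (\<exists>Ls :: nat \<Rightarrow> 'a \<Rightarrow> 'a \<Rightarrow> bool.
        (\<forall>i<k. linear_extension X lt (Ls i)) \<and>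
        (\<forall>x\<in>X. \<forall>y\<in>X. lt x y \<longleftrightarrow> (\<forall>i<k. Ls i x y)))"

definition poset_dim :: "'a set \<Rightarrow> ('a \<Rightarrow> 'a \<Rightarrow> bool) \<Rightarrow> nat" where
  "poset_dim X lt = (LEAST k. has_realizer X lt k)"

end

theory Submission
  imports Defs "HOL-Library.Product_Lexorder"
begin

(* Cut the line into the unit blocks [k, k+1) and let the block of x be that of l x.
  Since every interval has length at least 1, x < y puts y in a later block than x;
  since every length is at most 2, incomparable x, y have blocks at most two apart.
  One linear extension sorts by block and, inside a block, by decreasing left endpoint.
  Three more group the blocks into windows of three consecutive blocks, one for each
  residue of the window start mod 3, sort by window, and inside a window compare left
  endpoints of the last block against right endpoints of the other two. For an
  incomparable pair whose later block is the last one of its window, that window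
  extension orders the pair opposite to the block extension. Equal left endpoints are
  separated by an injection into nat, increasing in the block extension and decreasing in
  the window extensions. *)

lemma has_realizer_if_incomparables_reversed:
  assumes "0 < k"
    and ext: "\<And>i. i < k \<Longrightarrow> linear_extension X lt (L i)"
    and reversed: "\<And>x y. x \<in> X \<Longrightarrow> y \<in> X \<Longrightarrow> x \<noteq> y \<Longrightarrow> \<not> lt x y \<Longrightarrow> \<not> lt y x
      \<Longrightarrow> \<exists>i<k. L i y x"
  shows "has_realizer X lt k"
proof -
  have extends: "L i x y" if "i < k" "x \<in> X" "y \<in> X" "lt x y" for i x y
    using ext[OF that(1)] that(2-4) unfolding linear_extension_def by blast
  have asym: "\<not> L i y x" if "i < k" "x \<in> X" "y \<in> X" "L i x y" for i x y
  proof
    assume "L i y x"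
    with ext[OF that(1)] that(2-4) have "L i x x"
      unfolding linear_extension_def by blast
    with ext[OF that(1)] that(2) show False
      unfolding linear_extension_def by blast
  qed
  have "lt x y" if xy: "x \<in> X" "y \<in> X" and all: "\<forall>i<k. L i x y" for x y
  proof (rule ccontr)
    assume "\<not> lt x y"
    moreover have "\<not> lt y x"
      using all asym extends \<open>0 < k\<close> xy by blast
    moreover have "x \<noteq> y"
      using all asym \<open>0 < k\<close> xy by blast
    ultimately obtain i where "i < k" "L i y x"
      using reversed xy by blast
    with all asym xy show False by blast
  qed
  then show ?thesis
    unfolding has_realizer_def using ext extends by blast
qed

lemma linear_extension_key_order:
  fixes key :: "'a \<Rightarrow> 'b::linorder"
  assumes "inj_on key X"
    and "\<And>x y. x \<in> X \<Longrightarrow> y \<in> X \<Longrightarrow> lt x y \<Longrightarrow> key x < key y"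
  shows "linear_extension X lt (\<lambda>x y. key x < key y)"
  unfolding linear_extension_def
proof (intro conjI ballI impI)
  fix x y assume "x \<in> X" "y \<in> X" "x \<noteq> y"
  then have "key x \<noteq> key y" using inj_on_eq_iff[OF assms(1)] by blast
  then show "key x < key y \<or> key y < key x" by (rule linorder_neqE) simp_all
qed (use assms(2) in auto)

lemma floor_less_floor_if_add_one_le:
  fixes a b :: real
  assumes "a + 1 \<le> b"
  shows "\<lfloor>a\<rfloor> < \<lfloor>b\<rfloor>"
  using assms by (simp add: less_floor_iff) linarith

lemma window_position:
  fixes b c s :: int
  assumes "(c - s) mod 3 = 2" "c - 2 \<le> b" "b \<le> c"
  shows "(b - s) div 3 = (c - s) div 3" "(b - s) mod 3 = 2 - (c - b)"
  using assms by presburger+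

lemma ex_shift_mod_3_eq_2: "\<exists>s<3. (b - int s) mod 3 = (2::int)"
proof (intro exI conjI)
  show "nat ((b - 2) mod 3) < 3" by (simp add: nat_less_iff)
  show "(b - int (nat ((b - 2) mod 3))) mod 3 = 2" by (simp add: mod_diff_eq) presburger
qed

definition block_key :: "('a \<Rightarrow> real) \<Rightarrow> ('a \<Rightarrow> nat) \<Rightarrow> 'a \<Rightarrow> int \<times> real \<times> nat" where
  "block_key l f x = (\<lfloor>l x\<rfloor>, - l x, f x)"

(* After the shift by s, block b lies in window b div 3 at position b mod 3. The component
  - (b mod 3) makes a left endpoint in the last block precede an equal right endpoint. *)
definition window_key ::
    "('a \<Rightarrow> real) \<Rightarrow> ('a \<Rightarrow> real) \<Rightarrow> ('a \<Rightarrow> nat) \<Rightarrow> nat \<Rightarrow> 'a \<Rightarrow> int \<times> real \<times> int \<times> int" where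
  "window_key l r f s x =
    (let b = \<lfloor>l x\<rfloor> - int s
     in (b div 3, if b mod 3 = 2 then l x else r x, - (b mod 3), - int (f x)))"

lemma inj_on_block_key: "inj_on f X \<Longrightarrow> inj_on (block_key l f) X"
  by (auto simp: inj_on_def block_key_def)

lemma inj_on_window_key: "inj_on f X \<Longrightarrow> inj_on (window_key l r f s) X"
  by (auto simp: inj_on_def window_key_def Let_def)

lemma block_key_less_if_before:
  assumes "l x + 1 \<le> r x" "r x < l y"
  shows "block_key l f x < block_key l f y"
  using floor_less_floor_if_add_one_le[of "l x" "l y"] assms by (simp add: block_key_def)

lemma window_key_less_if_before:
  assumes "l x + 1 \<le> r x" "r x < l y" "l y \<le> r y"
  shows "window_key l r f s x < window_key l r f s y"
proof -
  have "\<lfloor>l x\<rfloor> - int s < \<lfloor>l y\<rfloor> - int s"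
    using floor_less_floor_if_add_one_le[of "l x" "l y"] assms by simp
  then have "(\<lfloor>l x\<rfloor> - int s) div 3 \<le> (\<lfloor>l y\<rfloor> - int s) div 3"
    by (simp add: zdiv_mono1)
  moreover have "(if p = 2 then l x else r x) < (if q = 2 then l y else r y)" for p q :: int
    using assms by auto
  ultimately show ?thesis
    by (auto simp: window_key_def Let_def order_le_less)
qed

lemma block_key_less_iff_window_key_greater:
  assumes "l x \<le> l y" "l y \<le> r x" "r x \<le> l x + 2"
    and last_in_window: "(\<lfloor>l y\<rfloor> - int s) mod 3 = 2"
  shows "block_key l f x < block_key l f y \<longleftrightarrow> window_key l r f s y < window_key l r f s x"
proof -
  have "\<lfloor>l y\<rfloor> < \<lfloor>l x\<rfloor> + 3"
    using floor_less_floor_if_add_one_le[of "l y" "l x + 3"] assms by simp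
  then have blocks: "\<lfloor>l y\<rfloor> - 2 \<le> \<lfloor>l x\<rfloor>" "\<lfloor>l x\<rfloor> \<le> \<lfloor>l y\<rfloor>"
    using assms by (simp_all add: floor_mono)
  note window = window_position[OF last_in_window blocks, simplified]
  define w where "w = (\<lfloor>l y\<rfloor> - int s) div 3"
  have window_key_y: "window_key l r f s y = (w, l y, -2, - int (f y))"
    using last_in_window by (simp add: window_key_def w_def)
  show ?thesis
  proof (cases "\<lfloor>l x\<rfloor> = \<lfloor>l y\<rfloor>")
    case True
    then have "window_key l r f s x = (w, l x, -2, - int (f x))"
      using last_in_window by (simp add: window_key_def w_def)
    with True window_key_y show ?thesis
      by (auto simp: block_key_def)
  next
    case False
    then have earlier: "\<lfloor>l x\<rfloor> < \<lfloor>l y\<rfloor>" and not_last: "(\<lfloor>l x\<rfloor> - int s) mod 3 < 2"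
      using blocks window(2) by auto
    then have "window_key l r f s x = (w, r x, - ((\<lfloor>l x\<rfloor> - int s) mod 3), - int (f x))"
      using window(1) by (simp add: window_key_def w_def)
    with earlier not_last window_key_y \<open>l y \<le> r x\<close> show ?thesis
      by (auto simp: block_key_def)
  qed
qed

lemma window_key_reverses_block_key:
  assumes "r x \<le> l x + 2" "r y \<le> l y + 2" "\<not> r x < l y" "\<not> r y < l x" "f x \<noteq> f y"
    and "block_key l f x < block_key l f y"
  shows "\<exists>s<3. window_key l r f s y < window_key l r f s x"
proof -
  have distinct: "window_key l r f s x \<noteq> window_key l r f s y" for s
    using \<open>f x \<noteq> f y\<close> by (simp add: window_key_def Let_def)
  have "\<exists>s<3. \<not> window_key l r f s x < window_key l r f s y"
  proof (cases "l x \<le> l y")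
    case True
    obtain s where "s < 3" "(\<lfloor>l y\<rfloor> - int s) mod 3 = 2"
      using ex_shift_mod_3_eq_2 by blast
    with True assms show ?thesis
      using block_key_less_iff_window_key_greater[of l x y r s f] by auto
  next
    case False
    obtain s where "s < 3" "(\<lfloor>l x\<rfloor> - int s) mod 3 = 2"
      using ex_shift_mod_3_eq_2 by blast
    with False assms show ?thesis
      using block_key_less_iff_window_key_greater[of l y x r s f] by auto
  qed
  with distinct show ?thesis
    by (meson neq_iff)
qed

lemma linear_extension_block_order:
  assumes "interval_rep X lt l r" "\<forall>x\<in>X. 1 \<le> r x - l x" "inj_on f X"
  shows "linear_extension X lt (\<lambda>x y. block_key l f x < block_key l f y)"
proof (rule linear_extension_key_order)
  show "inj_on (block_key l f) X"
    using assms(3) by (rule inj_on_block_key)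
  show "block_key l f x < block_key l f y" if "x \<in> X" "y \<in> X" "lt x y" for x y
    using assms that by (intro block_key_less_if_before) (auto simp: interval_rep_def)
qed

lemma linear_extension_window_order:
  assumes "interval_rep X lt l r" "\<forall>x\<in>X. 1 \<le> r x - l x" "inj_on f X"
  shows "linear_extension X lt (\<lambda>x y. window_key l r f s x < window_key l r f s y)"
proof (rule linear_extension_key_order)
  show "inj_on (window_key l r f s) X"
    using assms(3) by (rule inj_on_window_key)
  show "window_key l r f s x < window_key l r f s y" if "x \<in> X" "y \<in> X" "lt x y" for x y
    using assms that by (intro window_key_less_if_before) (auto simp: interval_rep_def)
qed

lemma incomparable_reversed_by_window_order:
  assumes "interval_rep X lt l r" "\<forall>x\<in>X. r x - l x \<le> 2" "inj_on f X"
    and "x \<in> X" "y \<in> X" "x \<noteq> y" "\<not> lt x y" "\<not> lt y x"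
    and "\<not> block_key l f y < block_key l f x"
  shows "\<exists>s<3. window_key l r f s y < window_key l r f s x"
proof (rule window_key_reverses_block_key)
  show "f x \<noteq> f y" "r x \<le> l x + 2" "r y \<le> l y + 2" "\<not> r x < l y" "\<not> r y < l x"
    using assms by (auto simp: interval_rep_def inj_on_eq_iff)
  have "block_key l f x \<noteq> block_key l f y"
    using inj_on_block_key[OF \<open>inj_on f X\<close>] assms by (meson inj_on_eq_iff)
  with assms(9) show "block_key l f x < block_key l f y"
    by (meson neq_iff)
qed

theorem theorem7p2:
  fixes X :: "'a set" and lt :: "'a \<Rightarrow> 'a \<Rightarrow> bool"
  assumes "finite X"
    and "strict_poset X lt"
    and "in_C 2 X lt"
  shows "poset_dim X lt \<le> 4"
proof -
  obtain l r where rep: "interval_rep X lt l r"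
    and lengths: "\<forall>x\<in>X. 1 \<le> r x - l x" "\<forall>x\<in>X. r x - l x \<le> 2"
    using assms(3) unfolding in_C_def by blast
  obtain f :: "'a \<Rightarrow> nat" where f: "inj_on f X"
    using finite_imp_inj_to_nat_seg[OF assms(1)] by blast
  define L where "L i = (case i of
      0 \<Rightarrow> (\<lambda>x y. block_key l f x < block_key l f y)
    | Suc s \<Rightarrow> (\<lambda>x y. window_key l r f s x < window_key l r f s y))" for i
  have "has_realizer X lt 4"
  proof (rule has_realizer_if_incomparables_reversed)
    show "linear_extension X lt (L i)" for i
      using linear_extension_block_order[OF rep lengths(1) f]
        linear_extension_window_order[OF rep lengths(1) f]
      by (cases i) (simp_all add: L_def)
    show "\<exists>i<4. L i y x" if incomparable: "x \<in> X" "y \<in> X" "x \<noteq> y" "\<not> lt x y" "\<not> lt y x" for x y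
    proof (cases "block_key l f y < block_key l f x")
      case True
      then show ?thesis unfolding L_def by (intro exI[of _ 0]) simp
    next
      case False
      then obtain s where "s < 3" "window_key l r f s y < window_key l r f s x"
        using incomparable_reversed_by_window_order[OF rep lengths(2) f incomparable] by blast
      then show ?thesis unfolding L_def by (intro exI[of _ "Suc s"]) simp
    qed
  qed simp
  then show ?thesis
    unfolding poset_dim_def by (rule Least_le)
qed

end
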